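(* Let $\gamma>0$ and $R\ge600(\gamma^{3/4}+\gamma^{-3/4})$. For every $j\in\mathbb{N}$, the equation $w=G_{j,R}(w)$ has a unique solution in $F_\infty$, and this solution lies in $F_j$. The solutions for different $j$ are different.
   Context: $\arg_-(\zeta)\in[-\pi,\pi)$, $\mathrm{sq}_-(\zeta)=\sqrt{|\zeta|}e^{\frac i2\arg_-(\zeta)}$. For $j\in\mathbb{N}$: $A(w)=\log\left|\frac{\mathrm{sq}_-(w^2+i\gamma)-w}{\mathrm{sq}_-(w^2+i\gamma)+w}\right|$, $B_j(w)=\arg_-\!\left(\frac{\mathrm{sq}_-(w^2+i\gamma)-w}{\mathrm{sq}_-(w^2+i\gamma)+w}\right)+2\pi j$, $G_{j,R}(w)=\frac{-B_j(w)+iA(w)}{2R}$. The sets are $F_\infty=\{w\in\mathbb{C}:\operatorname{Re}w\le0\le\operatorname{Im}w,\ |\operatorname{Re}w|\ge2\operatorname{Im}w\}$ and $F_j=\{w\in F_\infty: B_j(w)\ge2|A(w)|\}$. *)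

theory Defs
  imports "HOL-Analysis.Analysis"
begin

text \<open>Branch of the argument with values in [-pi, pi) (Isabelle's Arg takes values in (-pi, pi]).\<close>
definition arg_minus :: "complex \<Rightarrow> real" where
  "arg_minus z = (if Arg z = pi then - pi else Arg z)"

definition sq_minus :: "complex \<Rightarrow> complex" where
  "sq_minus z = complex_of_real (sqrt (cmod z)) * exp (\<i> * complex_of_real (arg_minus z / 2))"

definition quotQ :: "real \<Rightarrow> complex \<Rightarrow> complex" where
  "quotQ \<gamma> w = (sq_minus (w\<^sup>2 + \<i> * complex_of_real \<gamma>) - w) /
                (sq_minus (w\<^sup>2 + \<i> * complex_of_real \<gamma>) + w)"

definition A_fun :: "real \<Rightarrow> complex \<Rightarrow> real" where
  "A_fun \<gamma> w = ln (cmod (quotQ \<gamma> w))"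

definition B_fun :: "real \<Rightarrow> nat \<Rightarrow> complex \<Rightarrow> real" where
  "B_fun \<gamma> j w = arg_minus (quotQ \<gamma> w) + 2 * pi * real j"

definition G_fun :: "real \<Rightarrow> nat \<Rightarrow> real \<Rightarrow> complex \<Rightarrow> complex" where
  "G_fun \<gamma> j R w = (- complex_of_real (B_fun \<gamma> j w) + \<i> * complex_of_real (A_fun \<gamma> w))
                     / complex_of_real (2 * R)"

definition F_inf :: "complex set" where
  "F_inf = {w. Re w \<le> 0 \<and> 0 \<le> Im w \<and> \<bar>Re w\<bar> \<ge> 2 * Im w}"

definition F_j :: "real \<Rightarrow> nat \<Rightarrow> complex set" where
  "F_j \<gamma> j = {w \<in> F_inf. B_fun \<gamma> j w \<ge> 2 * \<bar>A_fun \<gamma> w\<bar>}"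

end

theory Submission
  imports Defs
begin

text \<open>On \<open>F_inf\<close> no branch cut is ever met: \<open>w\<^sup>2 + \<i>\<gamma>\<close> and the quotient
\<open>Q = (s - w) / (s + w)\<close>, \<open>s = csqrt (w\<^sup>2 + \<i>\<gamma>)\<close>, stay off the closed negative real axis.
So \<open>G\<^sub>j(w) = (\<i> Ln Q(w) - 2\<pi>j) / (2R)\<close> is holomorphic there, with \<open>(Ln Q)' = -2/s\<close>
and \<open>\<bar>s\<bar> \<ge> \<surd>\<gamma>/2\<close>; on the convex set \<open>F_inf\<close> it is therefore a contraction with
constant \<open>2/(R\<surd>\<gamma>) \<le> 1/300\<close>. Since \<open>\<bar>Q\<bar> \<ge> 1\<close> and \<open>Im (Ln Q) > -\<pi>\<close>, \<open>G\<^sub>j\<close> maps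
\<open>F_inf\<close> intersected with the disc of radius \<open>2\<pi>j/R\<close> into itself, and Banach's fixed point
theorem applies. A fixed point satisfies \<open>B\<^sub>j(w) = -2R Re w\<close> and \<open>A(w) = 2R Im w\<close>, so
the sector condition of \<open>F_inf\<close> turns into that of \<open>F\<^sub>j\<close>, and \<open>B\<^sub>j(w)\<close> determines \<open>j\<close>.\<close>

lemma mem_F_inf_iff: "w \<in> F_inf \<longleftrightarrow> Re w \<le> 0 \<and> 0 \<le> Im w \<and> 2 * Im w \<le> - Re w"
  by (auto simp: F_inf_def)

lemma zero_in_F_inf: "0 \<in> F_inf"
  by (simp add: mem_F_inf_iff)

lemma closed_F_inf: "closed F_inf"
  unfolding F_inf_def by (intro closed_Collect_conj closed_Collect_le continuous_intros)

lemma convex_F_inf: "convex F_inf"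
proof (rule convexI)
  fix x y :: complex and u v :: real
  assume "x \<in> F_inf" "y \<in> F_inf" "0 \<le> u" "0 \<le> v" "u + v = 1"
  then show "u *\<^sub>R x + v *\<^sub>R y \<in> F_inf"
    unfolding mem_F_inf_iff
    using mult_nonneg_nonneg[of u "- Re x - 2 * Im x"] mult_nonneg_nonneg[of v "- Re y - 2 * Im y"]
      mult_nonneg_nonpos[of u "Re x"] mult_nonneg_nonpos[of v "Re y"]
    by (simp add: algebra_simps)
qed

lemma F_inf_Im_sq_le: "w \<in> F_inf \<Longrightarrow> 4 * (Im w)\<^sup>2 \<le> (Re w)\<^sup>2"
  using power_mono[of "2 * Im w" "- Re w" 2] by (simp add: mem_F_inf_iff power_mult_distrib)

lemma shift_notin_nonpos_Reals:
  assumes "\<gamma> > 0" "w \<in> F_inf"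
  shows "w\<^sup>2 + \<i> * of_real \<gamma> \<notin> \<real>\<^sub>\<le>\<^sub>0"
proof
  assume "w\<^sup>2 + \<i> * of_real \<gamma> \<in> \<real>\<^sub>\<le>\<^sub>0"
  then have le: "(Re w)\<^sup>2 \<le> (Im w)\<^sup>2" and im: "2 * Re w * Im w + \<gamma> = 0"
    by (auto simp: complex_nonpos_Reals_iff power2_eq_square algebra_simps)
  have "0 < (Im w)\<^sup>2"
    using im assms(1) by auto
  then show False
    using le F_inf_Im_sq_le[OF assms(2)] by linarith
qed

lemma norm_shift_ge:
  assumes "\<gamma> > 0" "w \<in> F_inf"
  shows "\<gamma> / 4 \<le> norm (w\<^sup>2 + \<i> * of_real \<gamma>)"
proof -
  let ?z = "w\<^sup>2 + \<i> * of_real \<gamma>"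
  have "- Re w * (- Re w) \<ge> - Re w * (2 * Im w)" "Im w * (- Re w) \<ge> Im w * (2 * Im w)"
    using assms(2) unfolding mem_F_inf_iff by (intro mult_left_mono; linarith)+
  moreover have "Re ?z = Re w * Re w - Im w * Im w" "Im ?z = 2 * (Re w * Im w) + \<gamma>"
    by (simp_all add: power2_eq_square)
  ultimately have "\<gamma> / 4 \<le> Re ?z \<or> \<gamma> / 4 \<le> Im ?z"
    using assms(1) by (simp add: algebra_simps) linarith
  then show ?thesis
    using abs_Re_le_cmod[of ?z] abs_Im_le_cmod[of ?z] by linarith
qed

definition csqrt_shift :: "real \<Rightarrow> complex \<Rightarrow> complex" where
  "csqrt_shift \<gamma> w = csqrt (w\<^sup>2 + \<i> * of_real \<gamma>)"

definition quot_csqrt :: "real \<Rightarrow> complex \<Rightarrow> complex" where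
  "quot_csqrt \<gamma> w = (csqrt_shift \<gamma> w - w) / (csqrt_shift \<gamma> w + w)"

definition Ln_quot :: "real \<Rightarrow> complex \<Rightarrow> complex" where
  "Ln_quot \<gamma> w = Ln (quot_csqrt \<gamma> w)"

lemma csqrt_shift_sq: "(csqrt_shift \<gamma> w)\<^sup>2 = w\<^sup>2 + \<i> * of_real \<gamma>"
  by (simp add: csqrt_shift_def)

lemma csqrt_shift_Re_sq_minus_Im_sq:
  "(Re (csqrt_shift \<gamma> w))\<^sup>2 - (Im (csqrt_shift \<gamma> w))\<^sup>2 = (Re w)\<^sup>2 - (Im w)\<^sup>2"
  using arg_cong[OF csqrt_shift_sq[of \<gamma> w], of Re] by (simp add: power2_eq_square)

lemma csqrt_shift_neq:
  assumes "\<gamma> \<noteq> 0"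
  shows "csqrt_shift \<gamma> w \<noteq> w" "csqrt_shift \<gamma> w \<noteq> - w"
proof -
  have "(csqrt_shift \<gamma> w)\<^sup>2 \<noteq> w\<^sup>2"
    using assms by (simp add: csqrt_shift_sq complex_eq_iff)
  then show "csqrt_shift \<gamma> w \<noteq> w" "csqrt_shift \<gamma> w \<noteq> - w" by auto
qed

lemma csqrt_shift_add_neq_0: "\<gamma> \<noteq> 0 \<Longrightarrow> csqrt_shift \<gamma> w + w \<noteq> 0"
  using csqrt_shift_neq(2)[of \<gamma> w] by (simp add: eq_neg_iff_add_eq_0)

lemma quot_csqrt_neq_0: "\<gamma> \<noteq> 0 \<Longrightarrow> quot_csqrt \<gamma> w \<noteq> 0"
  using csqrt_shift_neq[of \<gamma> w] csqrt_shift_add_neq_0[of \<gamma> w] by (simp add: quot_csqrt_def)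

lemma norm_csqrt_shift_ge:
  assumes "\<gamma> > 0" "w \<in> F_inf"
  shows "sqrt \<gamma> / 2 \<le> norm (csqrt_shift \<gamma> w)"
proof -
  have "sqrt (\<gamma> / 4) \<le> sqrt (norm (w\<^sup>2 + \<i> * of_real \<gamma>))"
    using norm_shift_ge[OF assms] by simp
  then show ?thesis by (simp add: csqrt_shift_def real_sqrt_divide)
qed

lemma mult_add_mult_nonpos:
  fixes a b x y :: real
  assumes "0 \<le> a" "x \<le> 0" "y\<^sup>2 \<le> x\<^sup>2" "a\<^sup>2 - b\<^sup>2 = x\<^sup>2 - y\<^sup>2"
  shows "a * x + b * y \<le> 0"
proof (rule ccontr)
  assume "\<not> a * x + b * y \<le> 0"
  then have "(- (a * x))\<^sup>2 < (b * y)\<^sup>2"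
    using assms(1,2) by (intro power_strict_mono) (auto simp: mult_nonneg_nonpos)
  then have "a\<^sup>2 * x\<^sup>2 < b\<^sup>2 * y\<^sup>2" by (simp add: power_mult_distrib)
  moreover have "a\<^sup>2 = b\<^sup>2 + x\<^sup>2 - y\<^sup>2"
    using assms(4) by linarith
  ultimately have "0 < (y\<^sup>2 - x\<^sup>2) * (b\<^sup>2 + x\<^sup>2)"
    by (simp add: algebra_simps)
  moreover have "(y\<^sup>2 - x\<^sup>2) * (b\<^sup>2 + x\<^sup>2) \<le> 0"
    using assms(3) by (intro mult_nonpos_nonneg) auto
  ultimately show False by linarith
qed

lemma norm_quot_csqrt_ge_1:
  assumes "\<gamma> > 0" "w \<in> F_inf"
  shows "1 \<le> norm (quot_csqrt \<gamma> w)"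
proof -
  let ?s = "csqrt_shift \<gamma> w"
  have "(Im w)\<^sup>2 \<le> (Re w)\<^sup>2"
    using F_inf_Im_sq_le[OF assms(2)] zero_le_power2[of "Im w"] by linarith
  then have "Re ?s * Re w + Im ?s * Im w \<le> 0"
    using assms(2) csqrt_shift_Re_sq_minus_Im_sq[of \<gamma> w] Re_csqrt[of "w\<^sup>2 + \<i> * of_real \<gamma>"]
    by (intro mult_add_mult_nonpos) (auto simp: csqrt_shift_def mem_F_inf_iff)
  then have "(norm (?s + w))\<^sup>2 \<le> (norm (?s - w))\<^sup>2"
    by (simp add: cmod_power2 power2_sum power2_diff algebra_simps)
  then have "norm (?s + w) \<le> norm (?s - w)"
    by (simp add: power2_le_iff_abs_le)
  then show ?thesis
    using csqrt_shift_add_neq_0[of \<gamma> w] assms(1) by (simp add: quot_csqrt_def norm_divide)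
qed

lemma quot_csqrt_notin_nonpos_Reals:
  assumes "\<gamma> > 0" "w \<in> F_inf"
  shows "quot_csqrt \<gamma> w \<notin> \<real>\<^sub>\<le>\<^sub>0"
proof
  let ?s = "csqrt_shift \<gamma> w"
  assume "quot_csqrt \<gamma> w \<in> \<real>\<^sub>\<le>\<^sub>0"
  then obtain r where r: "r \<le> 0" "quot_csqrt \<gamma> w = of_real r"
    by (auto elim!: nonpos_Reals_cases)
  define c where "c = (1 + r) / (1 - r)"
  have "?s - w = of_real r * (?s + w)"
    using r(2) csqrt_shift_add_neq_0[of \<gamma> w] assms(1) by (simp add: quot_csqrt_def field_simps)
  then have "of_real (1 - r) * ?s = of_real (1 + r) * w"
    by (simp add: algebra_simps)
  then have "?s = of_real c * w"
    using r(1) by (simp add: c_def field_simps)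
  then have sq: "of_real (c\<^sup>2 - 1) * w\<^sup>2 = \<i> * of_real \<gamma>"
    using csqrt_shift_sq[of \<gamma> w] by (simp add: power_mult_distrib algebra_simps)
  have "(c\<^sup>2 - 1) * ((Re w)\<^sup>2 - (Im w)\<^sup>2) = 0" "(c\<^sup>2 - 1) * (2 * Re w * Im w) = \<gamma>"
    using arg_cong[OF sq, of Re] arg_cong[OF sq, of Im] by (simp_all add: power2_eq_square mult_ac)
  then have "(Re w)\<^sup>2 = (Im w)\<^sup>2" "Im w \<noteq> 0"
    using assms(1) by auto
  then show False
    using F_inf_Im_sq_le[OF assms(2)] by simp
qed

lemma arg_minus_eq_Arg: "z \<notin> \<real>\<^sub>\<le>\<^sub>0 \<Longrightarrow> arg_minus z = Arg z"
  by (auto simp: arg_minus_def Arg_eq_pi complex_nonpos_Reals_iff)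

lemma sq_minus_eq_csqrt:
  assumes "z \<notin> \<real>\<^sub>\<le>\<^sub>0"
  shows "sq_minus z = csqrt z"
proof -
  have "csqrt z \<noteq> 0"
    using assms by auto
  then have "csqrt z = of_real (sqrt (norm z)) * exp (\<i> * of_real (Arg z / 2))"
    using Arg_eq[of "csqrt z"] by simp
  then show ?thesis
    by (simp add: sq_minus_def arg_minus_eq_Arg[OF assms])
qed

lemma quotQ_eq_quot_csqrt:
  assumes "\<gamma> > 0" "w \<in> F_inf"
  shows "quotQ \<gamma> w = quot_csqrt \<gamma> w"
  using sq_minus_eq_csqrt[OF shift_notin_nonpos_Reals[OF assms]]
  by (simp add: quotQ_def quot_csqrt_def csqrt_shift_def)

definition G_log :: "real \<Rightarrow> nat \<Rightarrow> real \<Rightarrow> complex \<Rightarrow> complex" where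
  "G_log \<gamma> j R w = (\<i> * Ln_quot \<gamma> w - of_real (2 * pi * real j)) / of_real (2 * R)"

lemma A_fun_eq_Re_Ln_quot:
  assumes "\<gamma> > 0" "w \<in> F_inf"
  shows "A_fun \<gamma> w = Re (Ln_quot \<gamma> w)"
  using quot_csqrt_neq_0[of \<gamma> w] assms
  by (simp add: A_fun_def Ln_quot_def quotQ_eq_quot_csqrt)

lemma B_fun_eq_Im_Ln_quot:
  assumes "\<gamma> > 0" "w \<in> F_inf"
  shows "B_fun \<gamma> j w = Im (Ln_quot \<gamma> w) + 2 * pi * real j"
  using quot_csqrt_neq_0[of \<gamma> w] assms
  by (simp add: B_fun_def Ln_quot_def quotQ_eq_quot_csqrt Arg_eq_Im_Ln
      arg_minus_eq_Arg[OF quot_csqrt_notin_nonpos_Reals[OF assms]])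

lemma G_fun_eq_G_log:
  assumes "\<gamma> > 0" "w \<in> F_inf"
  shows "G_fun \<gamma> j R w = G_log \<gamma> j R w"
  by (simp add: G_fun_def G_log_def A_fun_eq_Re_Ln_quot[OF assms] B_fun_eq_Im_Ln_quot[OF assms]
      complex_eq_iff)

lemma has_field_derivative_Ln_quot:
  assumes "\<gamma> > 0" "w \<in> F_inf"
  shows "(Ln_quot \<gamma> has_field_derivative - 2 / csqrt_shift \<gamma> w) (at w)"
proof -
  let ?s = "csqrt_shift \<gamma> w"
  have nonzero: "?s \<noteq> 0" "?s + w \<noteq> 0" "?s - w \<noteq> 0"
    using shift_notin_nonpos_Reals[OF assms] assms(1) csqrt_shift_add_neq_0 csqrt_shift_neq(1)
    by (auto simp: csqrt_shift_def)
  have numerator_eq: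
    "(w / ?s - 1) * (?s + w) - (?s - w) * (w / ?s + 1) = - 2 * ((?s - w) * (?s + w)) / ?s"
    using nonzero by (simp add: field_simps)
  have derivative_eq:
    "inverse (quot_csqrt \<gamma> w) * (((w / ?s - 1) * (?s + w) - (?s - w) * (w / ?s + 1)) / (?s + w)\<^sup>2)
      = - 2 / ?s"
    unfolding numerator_eq quot_csqrt_def using nonzero by (simp add: divide_simps power2_eq_square)
  have "(csqrt_shift \<gamma> has_field_derivative w / ?s) (at w)"
    unfolding csqrt_shift_def[abs_def]
    using shift_notin_nonpos_Reals[OF assms]
    by (auto intro!: derivative_eq_intros simp: csqrt_shift_def)
  then have "(quot_csqrt \<gamma> has_field_derivative
      ((w / ?s - 1) * (?s + w) - (?s - w) * (w / ?s + 1)) / (?s + w)\<^sup>2) (at w)"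
    unfolding quot_csqrt_def[abs_def] using nonzero(2)
    by (auto intro!: derivative_eq_intros simp: power2_eq_square)
  from DERIV_chain2[OF has_field_derivative_Ln[OF quot_csqrt_notin_nonpos_Reals[OF assms]] this]
  show ?thesis
    unfolding Ln_quot_def[abs_def] derivative_eq .
qed

lemma Ln_quot_lipschitz:
  assumes "\<gamma> > 0" "x \<in> F_inf" "y \<in> F_inf"
  shows "norm (Ln_quot \<gamma> x - Ln_quot \<gamma> y) \<le> 4 / sqrt \<gamma> * norm (x - y)"
proof (rule field_differentiable_bound[OF convex_F_inf _ _ assms(2,3)])
  fix z assume z: "z \<in> F_inf"
  show "(Ln_quot \<gamma> has_field_derivative - 2 / csqrt_shift \<gamma> z) (at z within F_inf)"
    using has_field_derivative_Ln_quot[OF assms(1) z] by (rule has_field_derivative_at_within)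
  have "sqrt \<gamma> / 2 \<le> norm (csqrt_shift \<gamma> z)" "0 < sqrt \<gamma>"
    using norm_csqrt_shift_ge[OF assms(1) z] assms(1) by auto
  moreover from this have "0 < norm (csqrt_shift \<gamma> z)"
    by linarith
  ultimately have "2 / norm (csqrt_shift \<gamma> z) \<le> 2 / (sqrt \<gamma> / 2)"
    by (intro divide_left_mono) auto
  then show "norm (- 2 / csqrt_shift \<gamma> z) \<le> 4 / sqrt \<gamma>"
    by (simp add: norm_divide)
qed

lemma Ln_quot_0: "\<gamma> \<noteq> 0 \<Longrightarrow> Ln_quot \<gamma> 0 = 0"
  using csqrt_shift_add_neq_0[of \<gamma> 0] by (simp add: Ln_quot_def quot_csqrt_def)

lemma G_log_contraction:
  assumes "\<gamma> > 0" "R > 0" "x \<in> F_inf" "y \<in> F_inf"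
  shows "norm (G_log \<gamma> j R x - G_log \<gamma> j R y) \<le> 2 / (R * sqrt \<gamma>) * norm (x - y)"
proof -
  have "G_log \<gamma> j R x - G_log \<gamma> j R y = \<i> * (Ln_quot \<gamma> x - Ln_quot \<gamma> y) / of_real (2 * R)"
    by (simp add: G_log_def diff_divide_distrib algebra_simps)
  then have "norm (G_log \<gamma> j R x - G_log \<gamma> j R y) = norm (Ln_quot \<gamma> x - Ln_quot \<gamma> y) / (2 * R)"
    using assms(2) by (simp add: norm_divide norm_mult)
  also have "\<dots> \<le> 4 / sqrt \<gamma> * norm (x - y) / (2 * R)"
    using Ln_quot_lipschitz[OF assms(1,3,4)] assms(2) by (intro divide_right_mono) auto
  also have "\<dots> = 2 / (R * sqrt \<gamma>) * norm (x - y)"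
    by simp
  finally show ?thesis .
qed

lemma G_log_maps_disc:
  assumes "\<gamma> > 0" "600 \<le> R * sqrt \<gamma>" "1 \<le> j" "w \<in> F_inf" "norm w \<le> 2 * pi * j / R"
  shows "G_log \<gamma> j R w \<in> F_inf" "norm (G_log \<gamma> j R w) \<le> 2 * pi * j / R"
proof -
  let ?L = "Ln_quot \<gamma> w"
  have R: "R > 0"
    using zero_less_mult_pos2[of R "sqrt \<gamma>"] assms(1,2) by simp
  have "norm ?L \<le> 4 / sqrt \<gamma> * norm w"
    using Ln_quot_lipschitz[OF assms(1,4) zero_in_F_inf] Ln_quot_0[of \<gamma>] assms(1) by simp
  also have "\<dots> \<le> 4 / sqrt \<gamma> * (2 * pi * j / R)"
    using assms(1,5) by (intro mult_left_mono) auto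
  also have "\<dots> = 8 * pi * j / (R * sqrt \<gamma>)"
    by (simp add: mult_ac)
  also have "\<dots> \<le> 8 * pi * j / 600"
    using assms(2) by (intro divide_left_mono) auto
  finally have L_small: "2 * norm ?L \<le> pi * j"
    using norm_ge_zero[of ?L] by linarith
  have Re_L: "0 \<le> Re ?L"
    using norm_quot_csqrt_ge_1[OF assms(1,4)] quot_csqrt_neq_0[of \<gamma> w] assms(1)
    by (simp add: Ln_quot_def Re_Ln)
  have "- pi < Im ?L"
    using quot_csqrt_neq_0[of \<gamma> w] assms(1) by (simp add: Ln_quot_def mpi_less_Im_Ln)
  moreover have "pi \<le> pi * j"
    using assms(3) by simp
  ultimately have "2 * Re ?L \<le> Im ?L + 2 * pi * j"
    using L_small complex_Re_le_cmod[of ?L] by linarith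
  then show "G_log \<gamma> j R w \<in> F_inf"
    using R Re_L by (simp add: mem_F_inf_iff G_log_def Re_divide_of_real Im_divide_of_real
        divide_nonneg_pos divide_right_mono field_simps)
  have "norm (G_log \<gamma> j R w) \<le> (norm ?L + 2 * pi * j) / (2 * R)"
    using R norm_triangle_ineq4[of "\<i> * ?L" "of_real (2 * pi * j)"]
    by (simp add: G_log_def norm_divide norm_mult divide_right_mono)
  also have "\<dots> \<le> (2 * pi * j + 2 * pi * j) / (2 * R)"
    using L_small R norm_ge_zero[of ?L] by (intro divide_right_mono) linarith+
  also have "\<dots> = 2 * pi * j / R"
    by simp
  finally show "norm (G_log \<gamma> j R w) \<le> 2 * pi * j / R" .
qed

lemma ex1_fixed_point_G_fun:
  assumes "\<gamma> > 0" "600 \<le> R * sqrt \<gamma>" "1 \<le> j"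
  shows "\<exists>!w. w \<in> F_inf \<and> w = G_fun \<gamma> j R w"
proof -
  define c where "c = 2 / (R * sqrt \<gamma>)"
  define S where "S = F_inf \<inter> cball 0 (2 * pi * j / R)"
  have R: "R > 0"
    using zero_less_mult_pos2[of R "sqrt \<gamma>"] assms(1,2) by simp
  have c: "0 \<le> c" "c < 1"
    using assms(2) by (auto simp: c_def)
  have contraction: "norm (G_log \<gamma> j R x - G_log \<gamma> j R y) \<le> c * norm (x - y)"
    if "x \<in> F_inf" "y \<in> F_inf" for x y
    unfolding c_def by (rule G_log_contraction[OF assms(1) R that])
  have "\<exists>!w\<in>S. G_log \<gamma> j R w = w"
  proof (rule Banach_fix[OF _ _ c])
    show "complete S"
      unfolding S_def by (intro complete_eq_closed[THEN iffD2] closed_Int closed_F_inf closed_cball)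
    show "S \<noteq> {}"
      using R zero_in_F_inf by (auto simp: S_def)
    show "G_log \<gamma> j R ` S \<subseteq> S"
    proof (rule image_subsetI)
      fix w assume "w \<in> S"
      then show "G_log \<gamma> j R w \<in> S"
        using G_log_maps_disc[OF assms, of w] by (simp add: S_def)
    qed
    fix x y assume "x \<in> S" "y \<in> S"
    then show "dist (G_log \<gamma> j R x) (G_log \<gamma> j R y) \<le> c * dist x y"
      using contraction[of x y] by (simp add: S_def dist_norm)
  qed
  then obtain w where "w \<in> S" "G_log \<gamma> j R w = w"
    by blast
  then have w: "w \<in> F_inf" "w = G_fun \<gamma> j R w"
    using G_fun_eq_G_log[OF assms(1)] by (simp_all add: S_def)
  show ?thesis
  proof (rule ex1I[of _ w])
    fix v assume v: "v \<in> F_inf \<and> v = G_fun \<gamma> j R v"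
    then have "G_log \<gamma> j R v = v" "G_log \<gamma> j R w = w"
      using w by (metis G_fun_eq_G_log[OF assms(1)])+
    then have "norm (v - w) \<le> c * norm (v - w)"
      using contraction[of v w] v w(1) by simp
    then have "(1 - c) * norm (v - w) \<le> 0"
      by (simp add: algebra_simps)
    then show "v = w"
      using c by (simp add: mult_le_0_iff)
  qed (use w in simp)
qed

lemma G_fun_fixed_point_iff:
  assumes "R \<noteq> 0"
  shows "w = G_fun \<gamma> j R w \<longleftrightarrow> B_fun \<gamma> j w = - 2 * R * Re w \<and> A_fun \<gamma> w = 2 * R * Im w"
proof -
  have "Re (G_fun \<gamma> j R w) = - B_fun \<gamma> j w / (2 * R)" "Im (G_fun \<gamma> j R w) = A_fun \<gamma> w / (2 * R)"
    by (simp_all add: G_fun_def Re_divide_of_real Im_divide_of_real)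
  then show ?thesis
    using assms by (simp add: complex_eq_iff eq_divide_eq) (auto simp: algebra_simps)
qed

lemma fixed_point_G_fun_in_F_j:
  assumes "R > 0" "w \<in> F_inf" "w = G_fun \<gamma> j R w"
  shows "w \<in> F_j \<gamma> j"
proof -
  have "B_fun \<gamma> j w = - 2 * R * Re w" "A_fun \<gamma> w = 2 * R * Im w"
    using G_fun_fixed_point_iff[THEN iffD1, OF _ assms(3)] assms(1) by auto
  moreover have "R * (2 * Im w) \<le> R * (- Re w)"
    using assms(1,2) by (intro mult_left_mono) (auto simp: mem_F_inf_iff)
  moreover have "0 \<le> R * Im w"
    using assms(1,2) by (simp add: mem_F_inf_iff)
  ultimately show ?thesis
    using assms(2) by (auto simp: F_j_def algebra_simps)
qed

lemma fixed_points_G_fun_distinct: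
  assumes "R \<noteq> 0" "j \<noteq> k" "w = G_fun \<gamma> j R w" "v = G_fun \<gamma> k R v"
  shows "w \<noteq> v"
proof
  assume "w = v"
  then have "B_fun \<gamma> j w = B_fun \<gamma> k w"
    using G_fun_fixed_point_iff[THEN iffD1, OF assms(1)] assms(3,4) by metis
  then show False
    using assms(2) by (simp add: B_fun_def)
qed

lemma one_le_powr_sum_mult_sqrt:
  fixes \<gamma> :: real
  assumes "\<gamma> > 0"
  shows "1 \<le> (\<gamma> powr (3/4) + \<gamma> powr (-3/4)) * sqrt \<gamma>"
proof -
  have "\<gamma> powr (3/4) * \<gamma> powr (1/2) = \<gamma> powr (5/4)"
    using powr_add[of \<gamma> "3/4" "1/2"] by simp
  moreover have "\<gamma> powr (-3/4) * \<gamma> powr (1/2) = inverse (\<gamma> powr (1/4))"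
    using powr_add[of \<gamma> "-3/4" "1/2"] powr_minus[of \<gamma> "1/4"] by simp
  ultimately have sum_eq: "(\<gamma> powr (3/4) + \<gamma> powr (-3/4)) * sqrt \<gamma> = \<gamma> powr (5/4) + inverse (\<gamma> powr (1/4))"
    using assms by (simp add: powr_half_sqrt[symmetric] distrib_right)
  show ?thesis
  proof (cases "1 \<le> \<gamma>")
    case True
    then have "1 \<le> \<gamma> powr (5/4)"
      by (simp add: ge_one_powr_ge_zero)
    then show ?thesis
      unfolding sum_eq using assms by (simp add: add_increasing2)
  next
    case False
    then have "1 \<le> inverse (\<gamma> powr (1/4))"
      using assms powr_le1[of "1/4" \<gamma>] by (simp add: one_le_inverse_iff)
    then show ?thesis
      unfolding sum_eq by (simp add: add_increasing)
  qed
qed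

theorem proposition2p3:
  fixes \<gamma> R :: real
  assumes "\<gamma> > 0"
    and "R \<ge> 600 * (\<gamma> powr (3/4) + \<gamma> powr (-3/4))"
  shows "(\<forall>j::nat. j \<ge> 1 \<longrightarrow>
           (\<exists>!w. w \<in> F_inf \<and> w = G_fun \<gamma> j R w) \<and>
           (\<forall>w. w \<in> F_inf \<and> w = G_fun \<gamma> j R w \<longrightarrow> w \<in> F_j \<gamma> j)) \<and>
         (\<forall>(j::nat) (k::nat) w v. j \<ge> 1 \<longrightarrow> k \<ge> 1 \<longrightarrow> j \<noteq> k \<longrightarrow>
           w \<in> F_inf \<longrightarrow> w = G_fun \<gamma> j R w \<longrightarrow>
           v \<in> F_inf \<longrightarrow> v = G_fun \<gamma> k R v \<longrightarrow> w \<noteq> v)"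
proof -
  have "600 \<le> 600 * ((\<gamma> powr (3/4) + \<gamma> powr (-3/4)) * sqrt \<gamma>)"
    using one_le_powr_sum_mult_sqrt[OF assms(1)] by linarith
  also have "\<dots> \<le> R * sqrt \<gamma>"
    unfolding mult.assoc[symmetric] using assms by (intro mult_right_mono) auto
  finally have R_large: "600 \<le> R * sqrt \<gamma>" .
  then have R: "R > 0"
    using zero_less_mult_pos2[of R "sqrt \<gamma>"] assms(1) by simp
  show ?thesis
  proof (intro conjI allI impI)
    fix j :: nat assume "1 \<le> j"
    then show "\<exists>!w. w \<in> F_inf \<and> w = G_fun \<gamma> j R w"
      by (rule ex1_fixed_point_G_fun[OF assms(1) R_large])
  next
    fix j :: nat and w assume "w \<in> F_inf \<and> w = G_fun \<gamma> j R w"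
    then show "w \<in> F_j \<gamma> j"
      using fixed_point_G_fun_in_F_j[OF R] by blast
  next
    fix j k :: nat and w v assume "j \<noteq> k" "w = G_fun \<gamma> j R w" "v = G_fun \<gamma> k R v"
    then show "w \<noteq> v"
      using R by (intro fixed_points_G_fun_distinct) auto
  qed
qed

end
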